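(* For every $k\in\mathbb{Z}$, \[ [\alpha_{k+1}^\vee]_q\,\tau_k\,s_ks_{k+1}(\tau_{k+1})+[\alpha_k^\vee]_q\,s_{k+1}s_k(\tau_k)\,\tau_{k+1}=[\alpha_k^\vee+\alpha_{k+1}^\vee]_q\,s_k(\tau_k)\,s_{k+1}(\tau_{k+1}) \] holds in $D(\mathcal{A})$, where $w(\cdot)$ denotes the quantum birational Weyl group action.
   Context: $q$-difference case of type $A^{(1)}_{n-1}$, $n\ge3$: $I=\mathbb{Z}/n\mathbb{Z}$, $a_{ii}=2$, $a_{i,i\pm1}=-1$, $a_{ij}=0$ otherwise, $d_i=1$. $U_-$ is the $\mathbb{C}(q)$-algebra generated by $f_i$ ($i\in I$) with $q$-Serre relations $\sum_{k=0}^{1-a_{ij}}(-1)^kf_i^{(1-a_{ij}-k)}f_jf_i^{(k)}=0$ ($i\ne j$), $f_i^{(k)}=f_i^k/[k]_q!$, $[a]_q=(q^a-q^{-a})/(q-q^{-1})$. $A$ is a quotient of $U_-$ which is an integral domain with images $f_i\ne0$, and $f_i\mapsto f_{i+1}$ defines an algebra automorphism of $A$. $\tilde A=A[f_i^{-1}\mid i\in I]$ is the Ore localization at the multiplicative set generated by the $f_i$. $Q^\vee$ is the free $\mathbb{Z}$-module with basis $\delta^\vee,\epsilon_1^\vee,\dots,\epsilon_n^\vee$; set $\epsilon^\vee_{k+n}=\epsilon^\vee_k-\delta^\vee$ for all $k\in\mathbb{Z}$ and $\alpha_k^\vee=\epsilon_k^\vee-\epsilon_{k+1}^\vee$ (so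 $\alpha^\vee_{k+n}=\alpha^\vee_k$). $P=\mathrm{Hom}(Q^\vee,\mathbb{Z})$ with dual basis $\Lambda_0,\epsilon_1,\dots,\epsilon_n$; $\epsilon_{k+n}=\epsilon_k$; $\varpi_k=\epsilon_1+\dots+\epsilon_k$ for $k\ge0$, extended by $\varpi_{k+n}=\varpi_k+\varpi_n$ for all $k\in\mathbb{Z}$; $\Lambda_k=\Lambda_0+\varpi_k$; $\alpha_k=\epsilon_k-\epsilon_{k+1}$. For $k\in\mathbb{Z}$ write $s_k=s_{\bar k}$, $f_k=f_{\bar k}$, $\alpha_{\bar k}=\alpha_k$, $\alpha^\vee_{\bar k}=\alpha^\vee_k$. The Weyl group $W$ (generated by $s_i$, $i\in I$) acts on $Q^\vee,P$ by $s_i(\beta)=\beta-\langle\beta,\alpha_i\rangle\alpha_i^\vee$, $s_i(\lambda)=\lambda-\langle\alpha_i^\vee,\lambda\rangle\alpha_i$. $\tilde A^{\mathrm{pa}}=\tilde A[q^\beta\mid\beta\in Q^\vee]$ with $q^\beta$ central, $q^\beta q^\gamma=q^{\beta+\gamma}$; $[\beta]_q:=(q^\beta-q^{-\beta})/(q-q^{-1})$ for $\beta\in Q^\vee$. For $\lambda\in P$, $\phi_\lambda$ substitutes $q^\beta\mapsto q^{\langle\beta,\lambda\rangle}$, and $(\phi_\lambda)_\lambda$ identifies $\tilde A^{\mathrm{pa}}$ with a subalgebra of $\tilde A^P$. For an algebra $R$, $D(R^P)$ is generated by $R^P$ and invertible $\tau^\mu$ ($\mu\in P$) with $\tau^\lambda\tau^\mu=\tau^{\lambda+\mu}$,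 $\tau^\mu a=t_\mu(a)\tau^\mu$, $t_\mu((a_\lambda)_\lambda)=(a_{\lambda+\mu})_\lambda$. Fractional powers $f_i^\beta=(f_i^{\langle\beta,\lambda\rangle})_\lambda$. $\mathcal{A}\subset\tilde A^P$ is generated by $\tilde A^{\mathrm{pa}}$ and all $f_i^\beta$; $D(\mathcal{A})$ by $\mathcal{A}$ and all $\tau^\mu$. Tilde action: $\tilde w((a_\lambda)_\lambda)=(a_{w^{-1}(\lambda)})_\lambda$, $\tilde w(\tau^\mu)=\tau^{w(\mu)}$. The quantum birational Weyl group action of $W$ on $D(\mathcal{A})$ is $s_i(x)=f_i^{\alpha_i^\vee}\tilde s_i(x)f_i^{-\alpha_i^\vee}$. The $\tau$-variables are $\tau_k=\tau^{\Lambda_k}$ for $k\in\mathbb{Z}$. *)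

theory Defs
  imports "HOL-Computational_Algebra.Fraction_Field" "HOL-Computational_Algebra.Polynomial"
    "Berlekamp_Zassenhaus.Finite_Field"
begin

type_synonym Cq = "complex poly fract"

definition qX :: Cq where "qX = Fract [:0, 1:] 1"

definition qbr :: "int \<Rightarrow> Cq" where
  "qbr m = (qX powi m - qX powi (- m)) / (qX - inverse qX)"

definition qfact :: "nat \<Rightarrow> Cq" where
  "qfact m = (\<Prod>j\<in>{1..m}. qbr (int j))"

definition cartan :: "'n::nontriv mod_ring \<Rightarrow> 'n mod_ring \<Rightarrow> int" where
  "cartan i j = (if i = j then 2 else if j = i + 1 \<or> j = i - 1 then -1 else 0)"

text \<open>Both are represented as int x (I => int): for Q^vee the coordinates w.r.t.
  delta^vee and eps^vee_1..eps^vee_n (eps^vee_j indexed by the class of j in I);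
  for P w.r.t. Lambda_0 and eps_1..eps_n.\<close>
type_synonym 'n lat = "int \<times> ('n mod_ring \<Rightarrow> int)"

definition wzero :: "'n::finite lat" where "wzero = (0, \<lambda>_. 0)"
definition wadd :: "'n::finite lat \<Rightarrow> 'n lat \<Rightarrow> 'n lat" where
  "wadd x y = (fst x + fst y, \<lambda>j. snd x j + snd y j)"
definition wsmul :: "int \<Rightarrow> 'n::finite lat \<Rightarrow> 'n lat" where
  "wsmul c x = (c * fst x, \<lambda>j. c * snd x j)"
definition wneg :: "'n::finite lat \<Rightarrow> 'n lat" where
  "wneg x = wsmul (-1) x"
definition wsub :: "'n::finite lat \<Rightarrow> 'n lat \<Rightarrow> 'n lat" where
  "wsub x y = wadd x (wneg y)"

text \<open>Pairing <beta, lambda> between Q^vee and P (dual bases).\<close>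
definition pair :: "'n::finite lat \<Rightarrow> 'n lat \<Rightarrow> int" where
  "pair b l = fst b * fst l + (\<Sum>j\<in>UNIV. snd b j * snd l j)"

definition ncard :: "'n::finite itself \<Rightarrow> int" where "ncard _ = int CARD('n)"

definition Lam0 :: "'n::nontriv lat" where "Lam0 = (1, \<lambda>_. 0)"
definition eps :: "int \<Rightarrow> 'n::nontriv lat" where
  "eps k = (0, \<lambda>j. if j = of_int k then 1 else 0)"
definition varpi0 :: "int \<Rightarrow> 'n::nontriv lat" where
  "varpi0 r = (0, \<lambda>j. \<Sum>m\<in>{1..r}. snd (eps m :: 'n lat) j)"
text \<open>varpi_k for k in Z via varpi_(k+n) = varpi_k + varpi_n\<close>
definition varpi :: "int \<Rightarrow> 'n::nontriv lat" where
  "varpi k = wadd (wsmul (k div ncard TYPE('n)) (varpi0 (ncard TYPE('n))))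
                  (varpi0 (k mod ncard TYPE('n)))"
definition Lam :: "int \<Rightarrow> 'n::nontriv lat" where
  "Lam k = wadd Lam0 (varpi k)"
definition alpha :: "int \<Rightarrow> 'n::nontriv lat" where
  "alpha k = wsub (eps k) (eps (k + 1))"

text \<open>Coweights: eps^vee_k for k in Z, using eps^vee_(k+n) = eps^vee_k - delta^vee
  (k = q n + r with r in {1..n}).\<close>
definition delv :: "'n::nontriv lat" where "delv = (1, \<lambda>_. 0)"
definition epsv :: "int \<Rightarrow> 'n::nontriv lat" where
  "epsv k = wsub (0, \<lambda>j. if j = of_int k then 1 else 0)
                 (wsmul ((k - 1) div ncard TYPE('n)) delv)"
definition alphav :: "int \<Rightarrow> 'n::nontriv lat" where
  "alphav k = wsub (epsv k) (epsv (k + 1))"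

definition sP :: "int \<Rightarrow> 'n::nontriv lat \<Rightarrow> 'n lat" where
  "sP k l = wsub l (wsmul (pair (alphav k) l) (alpha k))"

definition ring_inv :: "'a::ring_1 \<Rightarrow> 'a" where
  "ring_inv x = (THE y. x * y = 1 \<and> y * x = 1)"
definition zpow :: "'a::ring_1 \<Rightarrow> int \<Rightarrow> 'a" where
  "zpow x m = (if 0 \<le> m then x ^ nat m else ring_inv x ^ nat (- m))"

inductive_set genA :: "(Cq \<Rightarrow> 'a::ring_1) \<Rightarrow> ('i \<Rightarrow> 'a) \<Rightarrow> 'a set"
  for \<iota> f where
  "\<iota> c \<in> genA \<iota> f"
| "f i \<in> genA \<iota> f"
| "x \<in> genA \<iota> f \<Longrightarrow> y \<in> genA \<iota> f \<Longrightarrow> x + y \<in> genA \<iota> f"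
| "x \<in> genA \<iota> f \<Longrightarrow> y \<in> genA \<iota> f \<Longrightarrow> x * y \<in> genA \<iota> f"

inductive_set genL :: "(Cq \<Rightarrow> 'a::ring_1) \<Rightarrow> ('i \<Rightarrow> 'a) \<Rightarrow> 'a set"
  for \<iota> f where
  "\<iota> c \<in> genL \<iota> f"
| "f i \<in> genL \<iota> f"
| "ring_inv (f i) \<in> genL \<iota> f"
| "x \<in> genL \<iota> f \<Longrightarrow> y \<in> genL \<iota> f \<Longrightarrow> x + y \<in> genL \<iota> f"
| "x \<in> genL \<iota> f \<Longrightarrow> y \<in> genL \<iota> f \<Longrightarrow> x * y \<in> genL \<iota> f"

definition dpow :: "(Cq \<Rightarrow> 'a::ring_1) \<Rightarrow> 'a \<Rightarrow> nat \<Rightarrow> 'a" where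
  "dpow \<iota> x k = \<iota> (inverse (qfact k)) * x ^ k"

text \<open>An element sum_mu c_mu tau^mu of D(Atilde^P) is represented by mu |-> c_mu,
  where c_mu :: P => Atilde (finitely many nonzero c_mu).\<close>
type_synonym ('n, 'a) Dalg = "'n lat \<Rightarrow> 'n lat \<Rightarrow> 'a"

definition dadd :: "('n::nontriv, 'a::ring_1) Dalg \<Rightarrow> ('n, 'a) Dalg \<Rightarrow> ('n, 'a) Dalg" where
  "dadd x y = (\<lambda>\<mu> l. x \<mu> l + y \<mu> l)"

text \<open>(c tau^mu)(d tau^nu) = c t_mu(d) tau^(mu+nu), t_mu(d)_lambda = d_(lambda+mu).\<close>
definition dmul :: "('n::nontriv, 'a::ring_1) Dalg \<Rightarrow> ('n, 'a) Dalg \<Rightarrow> ('n, 'a) Dalg" where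
  "dmul x y = (\<lambda>\<rho> l. \<Sum>\<mu>\<in>{\<mu>. x \<mu> \<noteq> (\<lambda>_. 0)}. x \<mu> l * y (wsub \<rho> \<mu>) (wadd l \<mu>))"

definition demb :: "('n::nontriv lat \<Rightarrow> 'a::ring_1) \<Rightarrow> ('n, 'a) Dalg" where
  "demb c = (\<lambda>\<mu>. if \<mu> = wzero then c else (\<lambda>_. 0))"

definition tau :: "'n::nontriv lat \<Rightarrow> ('n, 'a::ring_1) Dalg" where
  "tau \<mu> = (\<lambda>\<nu>. if \<nu> = \<mu> then (\<lambda>_. 1) else (\<lambda>_. 0))"

text \<open>Tilde action of s_k: s_k~(sum c_mu tau^mu) = sum s_k~(c_mu) tau^(s_k mu),
  s_k~(c)_lambda = c_(s_k^-1 lambda), and s_k^-1 = s_k.\<close>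
definition dtil :: "int \<Rightarrow> ('n::nontriv, 'a::ring_1) Dalg \<Rightarrow> ('n, 'a) Dalg" where
  "dtil k x = (\<lambda>\<rho> l. x (sP k \<rho>) (sP k l))"

text \<open>Fractional power f_i^beta = (f_i^<beta,lambda>)_lambda.\<close>
definition fpow :: "('n::nontriv mod_ring \<Rightarrow> 'a::ring_1) \<Rightarrow> int \<Rightarrow> 'n lat \<Rightarrow> ('n lat \<Rightarrow> 'a)" where
  "fpow f k \<beta> = (\<lambda>l. zpow (f (of_int k)) (pair \<beta> l))"

definition qact :: "('n::nontriv mod_ring \<Rightarrow> 'a::ring_1) \<Rightarrow> int \<Rightarrow> ('n, 'a) Dalg \<Rightarrow> ('n, 'a) Dalg" where
  "qact f k x = dmul (dmul (demb (fpow f k (alphav k))) (dtil k x))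
                     (demb (fpow f k (wneg (alphav k))))"

text \<open>[beta]_q in Atilde^pa, viewed in Atilde^P: ([<beta,lambda>]_q)_lambda.\<close>
definition qbrP :: "(Cq \<Rightarrow> 'a::ring_1) \<Rightarrow> 'n::nontriv lat \<Rightarrow> ('n lat \<Rightarrow> 'a)" where
  "qbrP \<iota> \<beta> = (\<lambda>l. \<iota> (qbr (pair \<beta> l)))"

end

theory Submission
  imports Defs
begin

text \<open>Every term of the identity is a monomial \<open>c \<tau>\<^sup>\<mu>\<close>, because the birational action sends
  \<open>\<tau>\<^sup>\<mu>\<close> to \<open>f\<^sub>k\<^bsup>\<langle>\<alpha>\<^sup>\<or>\<^sub>k,\<mu>\<rangle>\<^esup> \<tau>\<^bsup>s\<^sub>k\<mu>\<^esup>\<close>. The three monomials carry the same weight, so the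
  identity reduces to one in \<open>\<A>\<close> at each \<open>\<lambda>\<close>: with \<open>x = f\<^sub>k\<close>, \<open>y = f\<^sub>k\<^sub>+\<^sub>1\<close>,
  \<open>a = \<langle>\<alpha>\<^sup>\<or>\<^sub>k,\<lambda>\<rangle>\<close> and \<open>b = \<langle>\<alpha>\<^sup>\<or>\<^sub>k\<^sub>+\<^sub>1,\<lambda>\<rangle>\<close> it reads
  \<open>[b] x\<^bsup>a+1\<^esup> y x\<^bsup>-a\<^esup> + [a] y\<^bsup>b\<^esup> x y\<^bsup>1-b\<^esup> = [a+b] x y\<close>.
  The q-Serre relation between the adjacent generators \<open>x\<close> and \<open>y\<close> gives
  \<open>x\<^bsup>a+1\<^esup> y x\<^bsup>-a\<^esup> = [a+1] x y - [a] y x\<close> for all integers \<open>a\<close>, and the identity becomes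
  \<open>[b][a+1] - [a][b-1] = [a+b]\<close>.\<close>

section \<open>q-numbers\<close>

lemma qX_nonzero: "qX \<noteq> 0"
  by (simp add: qX_def Zero_fract_def eq_fract)

lemma qX_square_ne_const: "qX * qX \<noteq> Fract [:c:] 1"
proof
  assume "qX * qX = Fract [:c:] 1"
  hence "[:0, 0, 1:] = [:c:]"
    by (simp add: qX_def eq_fract)
  hence "degree [:0, 0, 1 :: complex:] = degree [:c:]" by argo
  thus False by simp
qed

lemma qX_square_ne: "qX * qX \<noteq> 1" "qX * qX \<noteq> -1"
  using qX_square_ne_const[of 1] qX_square_ne_const[of "-1"]
  by (simp_all add: One_fract_def minus_fract flip: pCons_one)

lemma q_denominator_nonzero: "qX - inverse qX \<noteq> 0"
  using qX_square_ne qX_nonzero by (auto simp: field_simps)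

lemma qbr_eq: "qbr m = (qX powi m - inverse (qX powi m)) / (qX - inverse qX)"
  by (simp add: qbr_def power_int_minus)

lemma qbr_0 [simp]: "qbr 0 = 0"
  by (simp add: qbr_def)

lemma qbr_1 [simp]: "qbr 1 = 1"
  using q_denominator_nonzero by (simp add: qbr_eq)

lemma qbr_2_nonzero: "qbr 2 \<noteq> 0"
proof
  assume "qbr 2 = 0"
  hence "qX * qX - inverse (qX * qX) = 0"
    using q_denominator_nonzero by (simp add: qbr_eq power2_eq_square)
  hence "(qX * qX) * (qX * qX) = 1"
    using qX_nonzero by (simp add: field_simps)
  hence "(qX * qX - 1) * (qX * qX + 1) = 0" by (simp add: algebra_simps)
  hence "qX * qX = 1 \<or> qX * qX = -1" by (simp add: eq_neg_iff_add_eq_0)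
  thus False using qX_square_ne by blast
qed

text \<open>With \<open>u = q\<^sup>a\<close>, \<open>v = q\<^sup>b\<close>, \<open>t = q\<close> this is \<open>[b][a+1] - [a][b-1] = [a+b]\<close>.\<close>
lemma q_number_identity:
  fixes t u v :: "'a::field"
  assumes "t \<noteq> 0" "u \<noteq> 0" "v \<noteq> 0" "t - inverse t \<noteq> 0"
  shows "(v - inverse v) / (t - inverse t) * ((u * t - inverse (u * t)) / (t - inverse t))
       - (u - inverse u) / (t - inverse t) * ((v * inverse t - inverse (v * inverse t)) / (t - inverse t))
       = (u * v - inverse (u * v)) / (t - inverse t)"
proof -
  define D where "D = t - inverse t"
  have "D \<noteq> 0" using assms(4) D_def by simp
  have numerator: "(v - inverse v) * (u * t - inverse (u * t))
      - (u - inverse u) * (v * inverse t - inverse (v * inverse t)) = (u * v - inverse (u * v)) * D"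
    unfolding D_def using assms(1-3) by (simp add: field_simps)
  have "(v - inverse v) / D * ((u * t - inverse (u * t)) / D)
      - (u - inverse u) / D * ((v * inverse t - inverse (v * inverse t)) / D)
      = ((v - inverse v) * (u * t - inverse (u * t))
         - (u - inverse u) * (v * inverse t - inverse (v * inverse t))) / (D * D)"
    using \<open>D \<noteq> 0\<close> by (simp add: field_simps)
  also have "\<dots> = (u * v - inverse (u * v)) / D"
    unfolding numerator using \<open>D \<noteq> 0\<close> by simp
  finally show ?thesis unfolding D_def .
qed

lemma qbr_add: "qbr b * qbr (a + 1) - qbr a * qbr (b - 1) = qbr (a + b)"
proof -
  have powers: "qX powi (a + b) = qX powi a * qX powi b" "qX powi (a + 1) = qX powi a * qX"
    "qX powi (b - 1) = qX powi b * inverse qX"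
    using qX_nonzero by (simp_all add: power_int_add power_int_diff field_simps)
  show ?thesis
    unfolding qbr_eq powers
    by (rule q_number_identity) (use qX_nonzero q_denominator_nonzero in auto)
qed

lemma qbr_recurrence: "qbr (a + 2) = qbr 2 * qbr (a + 1) - qbr a"
  using qbr_add[of 2 a] by simp


section \<open>Integer powers of units\<close>

lemma ring_inv_eqI:
  assumes "(x::'a::ring_1) * y = 1" "y * x = 1"
  shows "ring_inv x = y"
  unfolding ring_inv_def
proof (rule the_equality)
  fix z assume "x * z = 1 \<and> z * x = 1"
  hence "z = z * (x * y)" "z * x = 1" using assms by auto
  thus "z = y" by (simp flip: mult.assoc)
qed (use assms in simp)

lemma zpow_0 [simp]: "zpow x 0 = 1" and zpow_1 [simp]: "zpow x 1 = x"
  by (simp_all add: zpow_def)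

context
  fixes x y :: "'a::ring_1"
  assumes right_inverse: "x * y = 1" and left_inverse: "y * x = 1"
begin

lemma zpow_neg: "m < 0 \<Longrightarrow> zpow x m = y ^ nat (- m)"
  by (simp add: zpow_def ring_inv_eqI[OF right_inverse left_inverse])

lemma zpow_succ: "zpow x (m + 1) = zpow x m * x" "zpow x (m + 1) = x * zpow x m"
proof -
  have "zpow x (m + 1) = zpow x m * x \<and> zpow x (m + 1) = x * zpow x m"
  proof (cases "0 \<le> m")
    case True
    then show ?thesis by (simp add: zpow_def nat_add_distrib power_commutes)
  next
    case False
    then have m: "nat (- m) = Suc (nat (- m - 1))" by simp
    have "zpow x (m + 1) = y ^ nat (- m - 1)"
      using False by (cases "m + 1 = 0") (simp_all add: zpow_neg)
    moreover have "zpow x m * x = y ^ nat (- m - 1) * (y * x)"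
      using False by (simp add: zpow_neg m power_Suc2 mult.assoc del: power_Suc)
    moreover have "x * zpow x m = (x * y) * y ^ nat (- m - 1)"
      using False by (simp add: zpow_neg m mult.assoc)
    ultimately show ?thesis by (simp add: right_inverse left_inverse)
  qed
  thus "zpow x (m + 1) = zpow x m * x" "zpow x (m + 1) = x * zpow x m" by blast+
qed

lemma zpow_pred: "zpow x (m - 1) = zpow x m * y" "zpow x (m - 1) = y * zpow x m"
proof -
  have "zpow x m * y = zpow x (m - 1) * (x * y)"
    using zpow_succ(1)[of "m - 1"] by (simp add: mult.assoc)
  moreover have "y * zpow x m = (y * x) * zpow x (m - 1)"
    using zpow_succ(2)[of "m - 1"] by (simp add: mult.assoc)
  ultimately show "zpow x (m - 1) = zpow x m * y" "zpow x (m - 1) = y * zpow x m"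
    by (simp_all add: right_inverse left_inverse)
qed

lemma zpow_add: "zpow x m * zpow x n = zpow x (m + n)"
proof (induction n rule: int_induct[where k = 0])
  case (step1 i)
  then show ?case by (metis add.assoc mult.assoc zpow_succ(1))
next
  case (step2 i)
  then show ?case by (metis add_diff_eq mult.assoc zpow_pred(1))
qed simp

end

section \<open>Conjugation by powers of a generator\<close>

lemma cartan_adjacent [simp]:
  fixes i :: "'n::nontriv mod_ring"
  shows "cartan i (i + 1) = -1" "cartan (i + 1) i = -1"
  by (simp_all add: cartan_def)

locale Cq_algebra =
  fixes \<iota> :: "Cq \<Rightarrow> 'a::ring_1"
  assumes scalar_one: "\<iota> 1 = 1"
    and scalar_add: "\<And>x y. \<iota> (x + y) = \<iota> x + \<iota> y"
    and scalar_mult: "\<And>x y. \<iota> (x * y) = \<iota> x * \<iota> y"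
    and scalar_central: "\<And>c a. \<iota> c * a = a * \<iota> c"
begin

lemma scalar_zero [simp]: "\<iota> 0 = 0"
  using scalar_add[of 0 0] by simp

lemma scalar_diff: "\<iota> (x - y) = \<iota> x - \<iota> y"
  using scalar_add[of "x - y" y] by (simp add: eq_diff_eq)

lemma scalar_left_commute: "a * (\<iota> c * b) = \<iota> c * (a * b)"
  by (metis scalar_central mult.assoc)

lemma scalar_scalar_commute: "\<iota> c * (\<iota> d * a) = \<iota> d * (\<iota> c * a)"
  by (metis scalar_mult mult.commute mult.assoc)

lemma serre_relation_degree_two:
  assumes "(\<Sum>m\<in>{0..2}. (-1) ^ m * dpow \<iota> x (2 - m) * y * dpow \<iota> x m) = 0"
  shows "x * x * y + y * x * x = \<iota> (qbr 2) * (x * y * x)"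
proof -
  define c where "c = inverse (qbr 2)"
  have c: "\<iota> (qbr 2) * \<iota> c = 1"
    using qbr_2_nonzero unfolding c_def scalar_mult[symmetric] by (simp add: scalar_one)
  have "qfact 0 = 1" "qfact 1 = 1" "qfact 2 = qbr 2"
    by (simp_all add: qfact_def numeral_2_eq_2 atLeastAtMostSuc_conv)
  moreover have "{0..2} = {0, 1, 2::nat}" by auto
  ultimately have "\<iota> c * (x * x) * y - x * y * x + y * (\<iota> c * (x * x)) = 0"
    using assms by (simp add: dpow_def scalar_one c_def power2_eq_square diff_add_eq add_diff_eq mult.assoc)
  hence "\<iota> (qbr 2) * (\<iota> c * (x * x * y) - x * y * x + \<iota> c * (y * x * x)) = 0"
    by (simp add: scalar_left_commute mult.assoc)
  hence "(\<iota> (qbr 2) * \<iota> c) * (x * x * y) - \<iota> (qbr 2) * (x * y * x) + (\<iota> (qbr 2) * \<iota> c) * (y * x * x) = 0"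
    by (simp add: algebra_simps)
  thus ?thesis unfolding c by (simp add: algebra_simps)
qed

lemma serre_adjacent:
  fixes f :: "'n::nontriv mod_ring \<Rightarrow> 'a"
  assumes serre: "\<And>i j. i \<noteq> j \<Longrightarrow>
        (\<Sum>m\<in>{0..nat (1 - cartan i j)}. (-1) ^ m * dpow \<iota> (f i) (nat (1 - cartan i j) - m)
             * f j * dpow \<iota> (f i) m) = 0"
  shows "f i * f i * f (i + 1) + f (i + 1) * f i * f i = \<iota> (qbr 2) * (f i * f (i + 1) * f i)"
    "f (i + 1) * f (i + 1) * f i + f i * f (i + 1) * f (i + 1)
       = \<iota> (qbr 2) * (f (i + 1) * f i * f (i + 1))"
  using serre_relation_degree_two serre[of i "i + 1"] serre[of "i + 1" i] by simp_all

text \<open>Induction on \<open>a\<close> in both directions; each step conjugates once more by \<open>x\<close> and uses the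
  Serre relation to straighten \<open>x x y x\<^sup>-\<^sup>1\<close> (or \<open>x\<^sup>-\<^sup>1 y x x\<close>), the coefficients then obeying the
  recurrence of the q-numbers.\<close>
lemma zpow_conjugate:
  assumes inv: "x * g = 1" "g * x = 1"
    and serre: "x * x * y + y * x * x = \<iota> (qbr 2) * (x * y * x)"
  shows "zpow x (a + 1) * y * zpow x (- a) = \<iota> (qbr (a + 1)) * (x * y) - \<iota> (qbr a) * (y * x)"
proof (induction a rule: int_induct[where k = 0])
  case base
  then show ?case by (simp add: scalar_one)
next
  case (step1 i)
  have straighten: "x * x * y * g = \<iota> (qbr 2) * (x * y) - y * x"
  proof -
    have "x * x * y * g = (\<iota> (qbr 2) * (x * y * x) - y * x * x) * g"
      by (simp add: serre[symmetric])
    also have "\<dots> = \<iota> (qbr 2) * (x * y * (x * g)) - y * x * (x * g)"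
      by (simp add: algebra_simps)
    finally show ?thesis using inv by simp
  qed
  have "zpow x (i + 1 + 1) * y * zpow x (- (i + 1)) = x * (zpow x (i + 1) * y * zpow x (- i)) * g"
    using zpow_succ(2)[OF inv, of "i + 1"] zpow_pred(1)[OF inv, of "- i"] by (simp add: mult.assoc)
  also have "\<dots> = x * (\<iota> (qbr (i + 1)) * (x * y) - \<iota> (qbr i) * (y * x)) * g"
    using step1 by simp
  also have "\<dots> = \<iota> (qbr (i + 1)) * (x * x * y * g) - \<iota> (qbr i) * (x * y * (x * g))"
    by (simp add: algebra_simps scalar_left_commute)
  also have "\<dots> = \<iota> (qbr (i + 1)) * (\<iota> (qbr 2) * (x * y) - y * x) - \<iota> (qbr i) * (x * y)"
    using straighten inv by simp
  also have "\<dots> = \<iota> (qbr 2 * qbr (i + 1) - qbr i) * (x * y) - \<iota> (qbr (i + 1)) * (y * x)"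
    by (simp add: algebra_simps scalar_diff scalar_mult)
  also have "\<dots> = \<iota> (qbr (i + 1 + 1)) * (x * y) - \<iota> (qbr (i + 1)) * (y * x)"
    using qbr_recurrence[of i] by (simp add: add.assoc)
  finally show ?case .
next
  case (step2 i)
  have straighten: "g * y * x * x = \<iota> (qbr 2) * (y * x) - x * y"
  proof -
    have "g * y * x * x = g * (\<iota> (qbr 2) * (x * y * x) - x * x * y)"
      unfolding serre[symmetric] by (simp add: mult.assoc)
    also have "\<dots> = \<iota> (qbr 2) * ((g * x) * y * x) - (g * x) * x * y"
      by (simp add: algebra_simps scalar_left_commute)
    finally show ?thesis using inv by (simp add: mult.assoc)
  qed
  have "zpow x (i - 1 + 1) * y * zpow x (- (i - 1)) = g * (zpow x (i + 1) * y * zpow x (- i)) * x"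
    using zpow_pred(2)[OF inv, of "i + 1"] zpow_succ(1)[OF inv, of "- i"] by (simp add: mult.assoc)
  also have "\<dots> = g * (\<iota> (qbr (i + 1)) * (x * y) - \<iota> (qbr i) * (y * x)) * x"
    using step2 by simp
  also have "\<dots> = \<iota> (qbr (i + 1)) * ((g * x) * y * x) - \<iota> (qbr i) * (g * y * x * x)"
    by (simp add: algebra_simps scalar_left_commute)
  also have "\<dots> = \<iota> (qbr (i + 1)) * (y * x) - \<iota> (qbr i) * (\<iota> (qbr 2) * (y * x) - x * y)"
    using straighten inv by simp
  also have "\<dots> = \<iota> (qbr i) * (x * y) - \<iota> (qbr 2 * qbr i - qbr (i + 1)) * (y * x)"
    by (simp add: algebra_simps scalar_diff scalar_mult)
  also have "\<dots> = \<iota> (qbr (i - 1 + 1)) * (x * y) - \<iota> (qbr (i - 1)) * (y * x)"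
    using qbr_recurrence[of "i - 1"] by (simp add: add.commute)
  finally show ?case .
qed

lemma zpow_conjugate_sum:
  assumes inv_x: "x * g = 1" "g * x = 1" and inv_y: "y * h = 1" "h * y = 1"
    and serre_xy: "x * x * y + y * x * x = \<iota> (qbr 2) * (x * y * x)"
    and serre_yx: "y * y * x + x * y * y = \<iota> (qbr 2) * (y * x * y)"
  shows "\<iota> (qbr b) * (zpow x (a + 1) * y * zpow x (- a)) + \<iota> (qbr a) * (zpow y b * x * zpow y (1 - b))
     = \<iota> (qbr (a + b)) * (x * y)"
proof -
  have conj_y: "zpow y b * x * zpow y (1 - b) = \<iota> (qbr b) * (y * x) - \<iota> (qbr (b - 1)) * (x * y)"
    using zpow_conjugate[OF inv_y serre_yx, of "b - 1"] by simp
  have "\<iota> (qbr b) * (zpow x (a + 1) * y * zpow x (- a)) + \<iota> (qbr a) * (zpow y b * x * zpow y (1 - b))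
      = \<iota> (qbr b * qbr (a + 1) - qbr a * qbr (b - 1)) * (x * y)
        + (\<iota> (qbr a) * (\<iota> (qbr b) * (y * x)) - \<iota> (qbr b) * (\<iota> (qbr a) * (y * x)))"
    unfolding zpow_conjugate[OF inv_x serre_xy] conj_y
    by (simp add: algebra_simps scalar_mult scalar_diff)
  also have "\<dots> = \<iota> (qbr (a + b)) * (x * y)"
    by (simp add: qbr_add scalar_scalar_commute[of "qbr a" "qbr b"])
  finally show ?thesis .
qed

end

section \<open>Weights and coweights\<close>

lemma of_int_mod_ring_eq_iff:
  "(of_int x :: 'n::nontriv mod_ring) = of_int y \<longleftrightarrow> x mod int CARD('n) = y mod int CARD('n)"
  using of_int_eq_iff_cong_CHAR[where 'a="'n mod_ring", of x y] by (simp add: cong_def)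

lemma div_diff_pred_div:
  fixes j N :: int
  assumes "0 < N"
  shows "j div N - (j - 1) div N = (if N dvd j then 1 else 0)"
proof -
  define q r where "q = (j - 1) div N" and "r = (j - 1) mod N"
  have j: "j = N * q + (r + 1)" unfolding q_def r_def by simp
  have r: "0 \<le> r" "r < N" unfolding r_def using assms by simp_all
  show ?thesis
  proof (cases "r + 1 = N")
    case True
    then have "j = N * (q + 1)" using j by (simp add: algebra_simps)
    then have "j div N = q + 1" "N dvd j" using assms by simp_all
    then show ?thesis by (simp flip: q_def)
  next
    case False
    then have "j div N = q" "j mod N = r + 1"
      using j r by (simp_all add: div_pos_pos_trivial mod_pos_pos_trivial)
    then show ?thesis using r by (simp add: dvd_eq_mod_eq_0 flip: q_def)
  qed
qed

lemma wadd_wzero [simp]: "wadd x wzero = x" "wadd wzero x = x"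
  by (simp_all add: wadd_def wzero_def)

lemma wsmul_one [simp]: "wsmul 1 x = x"
  by (simp add: wsmul_def)

lemma wsub_eq_iff: "wsub \<rho> \<mu> = \<nu> \<longleftrightarrow> \<rho> = wadd \<mu> \<nu>"
  unfolding wsub_def wadd_def wneg_def wsmul_def prod_eq_iff fun_eq_iff by (auto simp: algebra_simps)

lemma pair_wadd [simp]: "pair b (wadd x y) = pair b x + pair b y"
  and pair_wadd_left [simp]: "pair (wadd b b') x = pair b x + pair b' x"
  and pair_wsmul [simp]: "pair b (wsmul c x) = c * pair b x"
  and pair_wsmul_left [simp]: "pair (wsmul c b) x = c * pair b x"
  by (simp_all add: pair_def wadd_def wsmul_def algebra_simps sum.distrib sum_distrib_left)

lemma pair_wneg [simp]: "pair b (wneg x) = - pair b x"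
  and pair_wneg_left [simp]: "pair (wneg b) x = - pair b x"
  and pair_wsub [simp]: "pair b (wsub x y) = pair b x - pair b y"
  by (simp_all add: wneg_def wsub_def)

lemma pair_alphav:
  "pair (alphav j :: 'n::nontriv lat) l
     = (if of_int j = (0 :: 'n mod_ring) then fst l else 0) + snd l (of_int j) - snd l (of_int (j + 1))"
proof -
  have "fst (alphav j :: 'n lat) = j div int CARD('n) - (j - 1) div int CARD('n)"
    by (simp add: alphav_def epsv_def wsub_def wadd_def wneg_def wsmul_def delv_def ncard_def)
  also have "\<dots> = (if of_int j = (0 :: 'n mod_ring) then 1 else 0)"
    using of_int_mod_ring_eq_iff[where 'n='n, of j 0]
    by (simp add: div_diff_pred_div dvd_eq_mod_eq_0)
  finally have fst_alphav: "fst (alphav j :: 'n lat) = (if of_int j = (0 :: 'n mod_ring) then 1 else 0)" .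
  have "(\<Sum>i\<in>UNIV. snd (alphav j :: 'n lat) i * snd l i)
      = (\<Sum>i\<in>UNIV. if i = of_int j then snd l i else 0) - (\<Sum>i\<in>UNIV. if i = of_int (j + 1) then snd l i else 0)"
    unfolding sum_subtractf[symmetric]
    by (rule sum.cong) (simp_all add: alphav_def epsv_def wsub_def wadd_def wneg_def wsmul_def delv_def)
  also have "\<dots> = snd l (of_int j) - snd l (of_int (j + 1))"
    by (simp add: sum.delta)
  finally show ?thesis unfolding pair_def fst_alphav by simp
qed

lemma pair_alphav_eps:
  "pair (alphav j :: 'n::nontriv lat) (eps m)
     = (if of_int j = (of_int m :: 'n mod_ring) then 1 else 0) - (if of_int (j + 1) = (of_int m :: 'n mod_ring) then 1 else 0)"
  by (simp add: pair_alphav eps_def del: of_int_add)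

lemma snd_varpi0_succ:
  assumes "0 \<le> r"
  shows "snd (varpi0 (r + 1) :: 'n::nontriv lat) i = snd (varpi0 r :: 'n lat) i + snd (eps (r + 1) :: 'n lat) i"
  using assms by (simp add: varpi0_def atLeastAtMostPlus1_int_conv add.commute)

lemma Lam_succ: "Lam (m + 1) = wadd (Lam m) (eps (m + 1) :: 'n::nontriv lat)"
proof -
  let ?N = "int CARD('n)"
  let ?S = "\<lambda>r. snd (varpi0 r :: 'n lat)"
  have N: "?N > 1" using nontriv[where 'a='n] by simp
  have snd_varpi: "snd (varpi k :: 'n lat) = (\<lambda>i. k div ?N * ?S ?N i + ?S (k mod ?N) i)" for k
    by (simp add: varpi_def wadd_def wsmul_def ncard_def)
  have eps_mod: "eps (m mod ?N + 1) = (eps (m + 1) :: 'n lat)"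
    using of_int_mod_CHAR[where 'a="'n mod_ring", of m] by (simp add: eps_def)
  define q r where "q = m div ?N" and "r = m mod ?N"
  have m: "m = ?N * q + r" and r: "0 \<le> r" "r < ?N"
    unfolding q_def r_def using N by simp_all
  have "snd (varpi (m + 1) :: 'n lat) i = snd (varpi m :: 'n lat) i + snd (eps (m + 1) :: 'n lat) i" for i
  proof (cases "r + 1 = ?N")
    case True
    then have "m + 1 = ?N * (q + 1)" using m by (simp add: algebra_simps)
    then have "(m + 1) div ?N = q + 1" "(m + 1) mod ?N = 0" using N by simp_all
    moreover have "?S ?N i = ?S r i + snd (eps (m + 1) :: 'n lat) i"
      using snd_varpi0_succ[of r i] True r eps_mod by (simp flip: r_def)
    ultimately show ?thesis by (simp add: snd_varpi varpi0_def algebra_simps flip: q_def r_def)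
  next
    case False
    then have "r + 1 < ?N" using r by linarith
    moreover have m_succ: "m + 1 = ?N * q + (r + 1)" using m by simp
    ultimately have "(m + 1) div ?N = q" "(m + 1) mod ?N = r + 1"
      unfolding m_succ using r by (simp_all add: div_pos_pos_trivial mod_pos_pos_trivial)
    then show ?thesis
      using snd_varpi0_succ[of r i] r eps_mod by (simp add: snd_varpi flip: q_def r_def)
  qed
  moreover have "fst (varpi k :: 'n lat) = 0" for k
    by (simp add: varpi_def varpi0_def wadd_def wsmul_def)
  ultimately show ?thesis
    by (simp add: Lam_def wadd_def eps_def prod_eq_iff fun_eq_iff algebra_simps)
qed

text \<open>\<open>\<Lambda>\<^sub>m\<close> is the fundamental weight dual to \<open>\<alpha>\<^sup>\<or>\<^sub>m\<close>: the pairing telescopes along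
  \<open>\<Lambda>\<^sub>m\<^sub>+\<^sub>1 = \<Lambda>\<^sub>m + \<epsilon>\<^sub>m\<^sub>+\<^sub>1\<close>.\<close>
lemma pair_alphav_Lam:
  "pair (alphav j :: 'n::nontriv lat) (Lam m) = (if of_int j = (of_int m :: 'n mod_ring) then 1 else 0)"
proof (induction m rule: int_induct[where k = 0])
  case base
  then show ?case by (simp add: pair_alphav Lam_def Lam0_def varpi_def varpi0_def wadd_def wsmul_def)
next
  case (step1 i)
  then show ?case by (simp add: Lam_succ pair_alphav_eps)
next
  case (step2 i)
  then show ?case
    using Lam_succ[of "i - 1", where 'n='n] by (auto simp: pair_alphav_eps algebra_simps)
qed

lemma cartan_eq_indicators:
  fixes a b :: "'n::nontriv mod_ring"
  assumes "(2 :: 'n mod_ring) \<noteq> 0"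
  shows "cartan a b = (if a = b then 1 else 0) - (if a + 1 = b then 1 else 0)
      - ((if a = b + 1 then 1 else 0) - (if a + 1 = b + 1 then 1 else 0))"
proof -
  define d where "d = b - a"
  have iff: "a = b \<longleftrightarrow> d = 0" "a + 1 = b + 1 \<longleftrightarrow> d = 0" "a + 1 = b \<longleftrightarrow> d = 1" "b = a + 1 \<longleftrightarrow> d = 1"
    "a = b + 1 \<longleftrightarrow> d = -1" "b = a - 1 \<longleftrightarrow> d = -1"
    unfolding d_def by (auto simp: algebra_simps)
  have "(1 :: 'n mod_ring) \<noteq> -1"
    using assms by (metis add_eq_0_iff one_add_one)
  then show ?thesis
    unfolding cartan_def iff by auto
qed

lemma pair_alphav_alpha:
  assumes "CARD('n::nontriv) \<ge> 3"
  shows "pair (alphav j :: 'n lat) (alpha k) = cartan (of_int j :: 'n mod_ring) (of_int k)"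
proof -
  have two: "(2 :: 'n mod_ring) \<noteq> 0"
    using of_int_mod_ring_eq_iff[where 'n='n, of 2 0] assms by simp
  define a b where "a = (of_int j :: 'n mod_ring)" and "b = (of_int k :: 'n mod_ring)"
  have "pair (alphav j :: 'n lat) (alpha k) = (if a = b then 1 else 0) - (if a + 1 = b then 1 else 0)
      - ((if a = b + 1 then 1 else 0) - (if a + 1 = b + 1 then 1 else 0))"
    unfolding a_def b_def alpha_def pair_wsub pair_alphav_eps by simp
  also have "\<dots> = cartan a b"
    by (rule cartan_eq_indicators[OF two, symmetric])
  finally show ?thesis unfolding a_def b_def .
qed

lemma pair_alphav_alpha_self: "pair (alphav k :: 'n::nontriv lat) (alpha k) = 2"
  by (simp add: alpha_def pair_alphav_eps)

lemma pair_alphav_sP: "pair (alphav k) (sP k w :: 'n::nontriv lat) = - pair (alphav k) w"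
  by (simp add: sP_def pair_alphav_alpha_self)

lemma sP_sP [simp]: "sP k (sP k w :: 'n::nontriv lat) = w"
  by (simp add: sP_def[of k "sP k w"] pair_alphav_sP)
    (simp add: sP_def wsub_def wadd_def wneg_def wsmul_def prod_eq_iff)

lemma sP_Lam_self: "sP k (Lam k :: 'n::nontriv lat) = wsub (Lam k) (alpha k)"
  by (simp add: sP_def pair_alphav_Lam)

context
  assumes card_ge_3: "CARD('n::nontriv) \<ge> 3"
begin

lemma pair_alphav_sP_Lam_adjacent:
  "pair (alphav k) (sP (k + 1) (Lam (k + 1)) :: 'n lat) = 1"
  "pair (alphav (k + 1)) (sP k (Lam k) :: 'n lat) = 1"
  using pair_alphav_alpha[OF card_ge_3, of k "k + 1"] pair_alphav_alpha[OF card_ge_3, of "k + 1" k]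
  by (simp_all add: sP_Lam_self pair_alphav_Lam)

lemma sP_sP_Lam_adjacent:
  "wadd (Lam k) (sP k (sP (k + 1) (Lam (k + 1))))
     = wadd (sP k (Lam k)) (sP (k + 1) (Lam (k + 1)) :: 'n lat)"
  "wadd (sP (k + 1) (sP k (Lam k))) (Lam (k + 1))
     = wadd (sP k (Lam k)) (sP (k + 1) (Lam (k + 1)) :: 'n lat)"
  by (simp_all only: sP_def[of _ "sP _ _"] pair_alphav_sP_Lam_adjacent wsmul_one)
    (simp_all add: sP_Lam_self wadd_def wsub_def wsmul_def wneg_def prod_eq_iff fun_eq_iff)

end

section \<open>Monomials of \<open>D(\<A>)\<close>\<close>

definition dmonom :: "('n::nontriv lat \<Rightarrow> 'a::ring_1) \<Rightarrow> 'n lat \<Rightarrow> ('n, 'a) Dalg" where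
  "dmonom c \<mu> = (\<lambda>\<nu>. if \<nu> = \<mu> then c else (\<lambda>_. 0))"

lemma tau_eq_dmonom: "tau \<mu> = dmonom (\<lambda>_. 1) \<mu>"
  by (simp add: tau_def dmonom_def)

lemma demb_eq_dmonom: "demb c = dmonom c wzero"
  by (simp add: demb_def dmonom_def)

lemma dadd_dmonom: "dadd (dmonom c \<mu>) (dmonom d \<mu>) = dmonom (\<lambda>l. c l + d l) \<mu>"
  by (auto simp: dadd_def dmonom_def fun_eq_iff)

lemma dmul_dmonom: "dmul (dmonom c \<mu>) (dmonom d \<nu>) = dmonom (\<lambda>l. c l * d (wadd l \<mu>)) (wadd \<mu> \<nu>)"
proof (cases "c = (\<lambda>_. 0)")
  case True
  then have "{\<mu>'. dmonom c \<mu> \<mu>' \<noteq> (\<lambda>_. 0)} = {}" by (auto simp: dmonom_def)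
  then show ?thesis using True unfolding dmul_def by (auto simp: dmonom_def fun_eq_iff)
next
  case False
  then have "{\<mu>'. dmonom c \<mu> \<mu>' \<noteq> (\<lambda>_. 0)} = {\<mu>}" by (auto simp: dmonom_def)
  then show ?thesis unfolding dmul_def by (auto simp: dmonom_def fun_eq_iff wsub_eq_iff)
qed

lemma dtil_dmonom: "dtil k (dmonom c \<mu>) = dmonom (\<lambda>l. c (sP k l)) (sP k \<mu>)"
proof -
  have "sP k \<rho> = \<mu> \<longleftrightarrow> \<rho> = sP k \<mu>" for \<rho> by auto
  then show ?thesis unfolding dtil_def dmonom_def by (simp add: fun_eq_iff)
qed

lemma qact_dmonom:
  "qact f k (dmonom c \<mu>) = dmonom (\<lambda>l. zpow (f (of_int k)) (pair (alphav k) l) * c (sP k l)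
      * zpow (f (of_int k)) (pair (alphav k) \<mu> - pair (alphav k) l)) (sP k \<mu>)"
  unfolding qact_def demb_eq_dmonom dtil_dmonom dmul_dmonom by (simp add: fpow_def pair_alphav_sP)

lemma qact_tau:
  assumes "f (of_int k) * g = 1" "g * f (of_int k) = 1"
  shows "qact f k (tau \<mu>) = dmonom (\<lambda>_. zpow (f (of_int k)) (pair (alphav k) \<mu>)) (sP k \<mu>)"
  unfolding tau_eq_dmonom qact_dmonom by (simp add: zpow_add[OF assms])

lemma qact_tau_Lam_self:
  fixes f :: "'n::nontriv mod_ring \<Rightarrow> 'a::ring_1"
  assumes "f (of_int k) * g = 1" "g * f (of_int k) = 1"
  shows "qact f k (tau (Lam k)) = dmonom (\<lambda>_. f (of_int k)) (sP k (Lam k :: 'n lat))"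
  by (simp add: qact_tau[where f = f, OF assms] pair_alphav_Lam)

lemma qact_qact_tau_Lam:
  fixes f :: "'n::nontriv mod_ring \<Rightarrow> 'a::ring_1"
  assumes inv_k: "f (of_int k) * g = 1" "g * f (of_int k) = 1"
    and pair_one: "pair (alphav j) (sP k (Lam k) :: 'n lat) = 1"
  shows "qact f j (qact f k (tau (Lam k)))
    = dmonom (\<lambda>l. zpow (f (of_int j)) (pair (alphav j) l) * f (of_int k)
        * zpow (f (of_int j)) (1 - pair (alphav j) l)) (sP j (sP k (Lam k)))"
  unfolding qact_tau_Lam_self[where f = f and k = k, OF inv_k] qact_dmonom pair_one ..

theorem mainTheorem6:
  fixes \<iota> :: "Cq \<Rightarrow> 'a::ring_1_no_zero_divisors"
    and f :: "'n::nontriv mod_ring \<Rightarrow> 'a"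
    and k :: int
  assumes n3: "CARD('n) \<ge> 3"
    and alg_one: "\<iota> 1 = 1"
    and alg_add: "\<And>x y. \<iota> (x + y) = \<iota> x + \<iota> y"
    and alg_mult: "\<And>x y. \<iota> (x * y) = \<iota> x * \<iota> y"
    and alg_central: "\<And>c a. \<iota> c * a = a * \<iota> c"
    and f_nonzero: "\<And>i. f i \<noteq> 0"
    and f_invertible: "\<And>i. \<exists>g. f i * g = 1 \<and> g * f i = 1"
    and serre: "\<And>i j. i \<noteq> j \<Longrightarrow>
        (\<Sum>m\<in>{0..nat (1 - cartan i j)}. (-1) ^ m * dpow \<iota> (f i) (nat (1 - cartan i j) - m)
             * f j * dpow \<iota> (f i) m) = 0"
    and rotation: "\<exists>\<sigma>. bij_betw \<sigma> (genA \<iota> f) (genA \<iota> f)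
        \<and> (\<forall>x\<in>genA \<iota> f. \<forall>y\<in>genA \<iota> f. \<sigma> (x + y) = \<sigma> x + \<sigma> y \<and> \<sigma> (x * y) = \<sigma> x * \<sigma> y)
        \<and> (\<forall>c. \<sigma> (\<iota> c) = \<iota> c) \<and> (\<forall>i. \<sigma> (f i) = f (i + 1))"
    and localization: "genL \<iota> f = UNIV"
  shows "dadd
      (dmul (dmul (demb (qbrP \<iota> (alphav (k + 1)))) (tau (Lam k)))
            (qact f k (qact f (k + 1) (tau (Lam (k + 1))))))
      (dmul (dmul (demb (qbrP \<iota> (alphav k))) (qact f (k + 1) (qact f k (tau (Lam k)))))
            (tau (Lam (k + 1))))
    = dmul (dmul (demb (qbrP \<iota> (wadd (alphav k) (alphav (k + 1))))) (qact f k (tau (Lam k))))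
           (qact f (k + 1) (tau (Lam (k + 1))))"
proof -
  interpret Cq_algebra \<iota>
    by unfold_locales (fact alg_one alg_add alg_mult alg_central)+
  define x y where "x = f (of_int k)" and "y = f (of_int (k + 1))"
  obtain g h where inv_x: "x * g = 1" "g * x = 1" and inv_y: "y * h = 1" "h * y = 1"
    unfolding x_def y_def using f_invertible by metis
  have serre_xy: "x * x * y + y * x * x = \<iota> (qbr 2) * (x * y * x)"
    and serre_yx: "y * y * x + x * y * y = \<iota> (qbr 2) * (y * x * y)"
    using serre_adjacent[OF serre, of "of_int k"] by (simp_all add: x_def y_def)
  note s_tau = qact_tau_Lam_self[where f = f and k = k, OF inv_x[unfolded x_def]]
    qact_tau_Lam_self[where f = f and k = "k + 1", OF inv_y[unfolded y_def]]
  note s_s_tau =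
    qact_qact_tau_Lam[where f = f and k = k, OF inv_x[unfolded x_def] pair_alphav_sP_Lam_adjacent(2)[OF n3]]
    qact_qact_tau_Lam[where f = f and k = "k + 1", OF inv_y[unfolded y_def] pair_alphav_sP_Lam_adjacent(1)[OF n3]]
  show ?thesis
    unfolding s_s_tau
    unfolding s_tau
    unfolding tau_eq_dmonom demb_eq_dmonom dmul_dmonom wadd_wzero sP_sP_Lam_adjacent[OF n3] dadd_dmonom
    by (intro arg_cong2[where f = dmonom] refl ext)
      (simp add: qbrP_def pair_alphav_Lam zpow_conjugate_sum[OF inv_x inv_y serre_xy serre_yx, unfolded mult.assoc]
        mult.assoc flip: x_def y_def[simplified])
qed

end
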